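(* Let $\ket{\psi}$ be an $n$-qubit pure state and let $\mathbf{z}\in\{0,1\}^n$ satisfy $p_\psi(\mathbf{z})>0$. Let $P$ be any partition of $[n]$ such that $\ket{\psi}=\bigotimes_{\alpha\in P}\ket{\psi_\alpha}$ for pure states $\ket{\psi_\alpha}$ on the qubits in $\alpha$. Then for every block $\alpha\in P$, the Hamming weight of the substring $\mathbf{z}_\alpha=(z_i)_{i\in\alpha}$ is even. Equivalently, $\ket{\psi}$ cannot be a product with respect to any partition having a block on which the restriction of $\mathbf{z}$ has odd Hamming weight.
   Context: Parallelized controlled-SWAP test: for an $n$-qubit state $\ket{\psi}$, take two copies $\ket{\psi}^{\otimes 2}$ and let $\mathbb{F}^{(i)}$ denote the swap operator exchanging the $i$-th qubit of the first copy with the $i$-th qubit of the second copy. The probability of the outcome bitstring $\mathbf{z}\in\{0,1\}^n$ is $p_\psi(\mathbf{z})=\mathrm{Tr}\big[\big(\bigotimes_{i=1}^n\tfrac12(\mathbb{1}+(-1)^{z_i}\mathbb{F}^{(i)})\big)(\ket{\psi}\!\bra{\psi})^{\otimes 2}\big]$. *)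

theory Defs
  imports Complex_Main "HOL-Library.Disjoint_Sets"
begin

text \<open>Qubits are indexed by natural numbers; the n-qubit register uses qubits 0..n-1.
  A computational basis string on a set of qubits A is a function nat => bool that is
  False outside A. A (pure) state vector on A is a function from such strings to complex
  amplitudes.\<close>

definition bitstrs :: "nat set \<Rightarrow> (nat \<Rightarrow> bool) set" where
  "bitstrs A = {x. \<forall>i. x i \<longrightarrow> i \<in> A}"

definition restr :: "nat set \<Rightarrow> (nat \<Rightarrow> bool) \<Rightarrow> (nat \<Rightarrow> bool)" where
  "restr A x = (\<lambda>i. x i \<and> i \<in> A)"

definition is_pure_state :: "nat set \<Rightarrow> ((nat \<Rightarrow> bool) \<Rightarrow> complex) \<Rightarrow> bool" where
  "is_pure_state A \<phi> \<longleftrightarrow> (\<Sum>x\<in>bitstrs A. (cmod (\<phi> x))\<^sup>2) = 1"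

text \<open>Matrix element <x,y| Pi_z |x',y'> of the projector
  Pi_z = tensor_i (1/2)(1 + (-1)^{z_i} F^{(i)}) on two copies of n qubits,
  where F^{(i)} swaps qubit i of the first copy with qubit i of the second copy
  (single-site matrix element <a,b|F|a',b'> = [a = b'][b = a']).\<close>

definition swap_proj :: "nat \<Rightarrow> (nat \<Rightarrow> bool) \<Rightarrow> (nat \<Rightarrow> bool) \<times> (nat \<Rightarrow> bool)
    \<Rightarrow> (nat \<Rightarrow> bool) \<times> (nat \<Rightarrow> bool) \<Rightarrow> complex" where
  "swap_proj n z u v =
     (\<Prod>i<n. (1/2) * ((if fst u i = fst v i \<and> snd u i = snd v i then 1 else 0)
                      + (-1) ^ (if z i then 1 else 0) *
                        (if fst u i = snd v i \<and> snd u i = fst v i then 1 else 0)))"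

text \<open>p_psi(z) = Tr[Pi_z (|psi><psi|)^{(x)2}] = sum_{u,v} (Pi_z)_{u,v} (rho (x) rho)_{v,u}.
  The trace is real; we take its real part to obtain a real number.\<close>

definition swap_prob :: "nat \<Rightarrow> ((nat \<Rightarrow> bool) \<Rightarrow> complex) \<Rightarrow> (nat \<Rightarrow> bool) \<Rightarrow> real" where
  "swap_prob n \<psi> z = Re (\<Sum>u\<in>bitstrs {..<n} \<times> bitstrs {..<n}. \<Sum>v\<in>bitstrs {..<n} \<times> bitstrs {..<n}.
      swap_proj n z u v * (\<psi> (fst v) * \<psi> (snd v) * cnj (\<psi> (fst u) * \<psi> (snd u))))"

end

theory Submission
  imports Defs
begin

text \<open>Exchanging the two copies on the qubits of a block \<open>A\<close> multiplies the projector
  \<open>\<Pi>\<^sub>z\<close> by \<open>(-1)\<^bsup>|z\<^sub>A|\<^esup>\<close>, while it leaves \<open>\<psi> \<otimes> \<psi>\<close> unchanged when \<open>\<psi>\<close> factorises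
  across a partition containing \<open>A\<close>. Reindexing the trace by this exchange therefore gives
  \<open>p\<^sub>\<psi>(z) = (-1)\<^bsup>|z\<^sub>A|\<^esup> p\<^sub>\<psi>(z)\<close>, so \<open>p\<^sub>\<psi>(z) = 0\<close> as soon as \<open>|z\<^sub>A|\<close> is odd.\<close>

definition swap_copies :: "nat set \<Rightarrow> (nat \<Rightarrow> bool) \<times> (nat \<Rightarrow> bool) \<Rightarrow> (nat \<Rightarrow> bool) \<times> (nat \<Rightarrow> bool)" where
  "swap_copies A v =
     ((\<lambda>i. if i \<in> A then snd v i else fst v i), (\<lambda>i. if i \<in> A then fst v i else snd v i))"

lemma swap_copies_swap_copies [simp]: "swap_copies A (swap_copies A v) = v"
  by (auto simp: swap_copies_def)

lemma swap_copies_in_bitstrs: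
  "v \<in> bitstrs N \<times> bitstrs N \<Longrightarrow> swap_copies A v \<in> bitstrs N \<times> bitstrs N"
  by (auto simp: swap_copies_def bitstrs_def)

lemma bij_betw_swap_copies:
  "bij_betw (swap_copies A) (bitstrs N \<times> bitstrs N) (bitstrs N \<times> bitstrs N)"
  by (rule bij_betw_byWitness[where f' = "swap_copies A"]) (simp_all add: image_subset_iff swap_copies_in_bitstrs del: mem_Times_iff)

lemma restr_swap_copies_subset:
  assumes "B \<subseteq> A"
  shows "restr B (fst (swap_copies A v)) = restr B (snd v)"
    and "restr B (snd (swap_copies A v)) = restr B (fst v)"
  using assms by (auto simp: restr_def swap_copies_def)

lemma restr_swap_copies_disjoint:
  assumes "B \<inter> A = {}"
  shows "restr B (fst (swap_copies A v)) = restr B (fst v)"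
    and "restr B (snd (swap_copies A v)) = restr B (snd v)"
  using assms by (auto simp: restr_def swap_copies_def fun_eq_iff)

lemma swap_proj_swap_copies:
  assumes "A \<subseteq> {..<n}"
  shows "swap_proj n z u (swap_copies A v) = (-1) ^ card {i\<in>A. z i} * swap_proj n z u v"
proof -
  define s where "s i = (if i \<in> A \<and> z i then (-1::complex) else 1)" for i
  have factor: "(1/2) * ((if fst u i = fst (swap_copies A v) i \<and> snd u i = snd (swap_copies A v) i then 1 else 0)
                      + (-1) ^ (if z i then 1 else 0) *
                        (if fst u i = snd (swap_copies A v) i \<and> snd u i = fst (swap_copies A v) i then 1 else 0))
        = s i * ((1/2) * ((if fst u i = fst v i \<and> snd u i = snd v i then 1 else 0)
                      + (-1) ^ (if z i then 1 else 0) *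
                        (if fst u i = snd v i \<and> snd u i = fst v i then 1 else 0)))" for i
    by (cases "i \<in> A"; cases "z i") (auto simp: swap_copies_def s_def algebra_simps)
  have "(\<Prod>i<n. s i) = (\<Prod>i\<in>{i\<in>{..<n}. i \<in> A \<and> z i}. (-1::complex))"
    unfolding s_def by (simp add: prod.If_cases Int_def)
  also have "{i\<in>{..<n}. i \<in> A \<and> z i} = {i\<in>A. z i}"
    using assms by auto
  finally have "(\<Prod>i<n. s i) = (-1) ^ card {i\<in>A. z i}"
    by simp
  moreover have "swap_proj n z u (swap_copies A v) = (\<Prod>i<n. s i) * swap_proj n z u v"
    unfolding swap_proj_def factor prod.distrib ..
  ultimately show ?thesis
    by simp
qed

lemma product_state_swap_copies:
  assumes "disjoint P" and "A \<in> P"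
    and "\<forall>x\<in>bitstrs N. \<psi> x = (\<Prod>\<alpha>\<in>P. \<phi> \<alpha> (restr \<alpha> x))"
    and "v \<in> bitstrs N \<times> bitstrs N"
  shows "\<psi> (fst (swap_copies A v)) * \<psi> (snd (swap_copies A v)) = \<psi> (fst v) * \<psi> (snd v)"
proof -
  have factor: "\<phi> \<beta> (restr \<beta> (fst (swap_copies A v))) * \<phi> \<beta> (restr \<beta> (snd (swap_copies A v)))
      = \<phi> \<beta> (restr \<beta> (fst v)) * \<phi> \<beta> (restr \<beta> (snd v))" if "\<beta> \<in> P" for \<beta>
  proof (cases "\<beta> = A")
    case True
    then show ?thesis
      by (simp add: restr_swap_copies_subset mult.commute)
  next
    case False
    with \<open>\<beta> \<in> P\<close> assms(1,2) have "\<beta> \<inter> A = {}"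
      by (auto simp: disjoint_def)
    then show ?thesis
      by (simp add: restr_swap_copies_disjoint)
  qed
  have two_copies: "\<psi> (fst w) * \<psi> (snd w) = (\<Prod>\<beta>\<in>P. \<phi> \<beta> (restr \<beta> (fst w)) * \<phi> \<beta> (restr \<beta> (snd w)))"
    if "w \<in> bitstrs N \<times> bitstrs N" for w
    using assms(3) that by (simp add: prod.distrib mem_Times_iff)
  show ?thesis
    using two_copies[OF swap_copies_in_bitstrs[OF assms(4)]] two_copies[OF assms(4)]
    by (simp add: factor cong: prod.cong)
qed

lemma swap_prob_eq_0_if_odd:
  assumes "A \<subseteq> {..<n}" and "odd (card {i\<in>A. z i})"
    and invariant: "\<And>v. v \<in> bitstrs {..<n} \<times> bitstrs {..<n} \<Longrightarrow>
      \<psi> (fst (swap_copies A v)) * \<psi> (snd (swap_copies A v)) = \<psi> (fst v) * \<psi> (snd v)"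
  shows "swap_prob n \<psi> z = 0"
proof -
  define V where "V = bitstrs {..<n} \<times> bitstrs {..<n}"
  have inner_sum_0: "(\<Sum>v\<in>V. swap_proj n z u v * (\<psi> (fst v) * \<psi> (snd v) * c)) = 0" for u c
  proof -
    let ?g = "\<lambda>v. swap_proj n z u v * (\<psi> (fst v) * \<psi> (snd v) * c)"
    have "sum ?g V = sum (\<lambda>v. ?g (swap_copies A v)) V"
      using sum.reindex_bij_betw[OF bij_betw_swap_copies[of A "{..<n}"], of ?g] V_def by simp
    also have "\<dots> = sum (\<lambda>v. - ?g v) V"
    proof (rule sum.cong)
      fix v assume "v \<in> V"
      then have "\<psi> (fst (swap_copies A v)) * \<psi> (snd (swap_copies A v)) = \<psi> (fst v) * \<psi> (snd v)"
        unfolding V_def by (rule invariant)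
      with assms(1,2) show "?g (swap_copies A v) = - ?g v"
        by (simp add: swap_proj_swap_copies)
    qed simp
    finally show ?thesis
      by (simp add: sum_negf)
  qed
  show ?thesis
    unfolding swap_prob_def V_def[symmetric] by (simp add: inner_sum_0)
qed

theorem proposition3:
  fixes n :: nat
    and \<psi> :: "(nat \<Rightarrow> bool) \<Rightarrow> complex"
    and z :: "nat \<Rightarrow> bool"
    and P :: "nat set set"
    and \<phi> :: "nat set \<Rightarrow> (nat \<Rightarrow> bool) \<Rightarrow> complex"
  assumes "is_pure_state {..<n} \<psi>"
    and "z \<in> bitstrs {..<n}"
    and "swap_prob n \<psi> z > 0"
    and "partition_on {..<n} P"
    and "\<forall>\<alpha>\<in>P. is_pure_state \<alpha> (\<phi> \<alpha>)"
    and "\<forall>x\<in>bitstrs {..<n}. \<psi> x = (\<Prod>\<alpha>\<in>P. \<phi> \<alpha> (restr \<alpha> x))"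
  shows "\<forall>\<alpha>\<in>P. even (card {i\<in>\<alpha>. z i})"
proof (rule ccontr)
  assume "\<not> ?thesis"
  then obtain A where "A \<in> P" and "odd (card {i\<in>A. z i})"
    by auto
  moreover from \<open>A \<in> P\<close> assms(4) have "A \<subseteq> {..<n}"
    by (auto dest: partition_onD1)
  moreover have "disjoint P"
    using assms(4) by (rule partition_onD2)
  ultimately have "swap_prob n \<psi> z = 0"
    using assms(6) by (intro swap_prob_eq_0_if_odd product_state_swap_copies) auto
  with assms(3) show False
    by simp
qed

end
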